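(* Let $f(z)=\sum_{n=0}^\infty A_nz^n$, $A_n\in B(\mathcal H)$, be a bounded operator-valued analytic function on the open unit disc $\mathbb D$ such that $A_0=a_0I$ for some $a_0\in\mathbb C$. Then $\sum_{n=0}^\infty\|A_n\|r^n\le\|f\|_\infty$ for every $r\in[0,\frac13]$, and $\frac13$ is the best possible constant. Moreover, the inequality is strict unless $f$ is constant.
   Context: $\|f\|_\infty=\sup_{z\in\mathbb D}\|f(z)\|$; $\mathcal H$ is a separable Hilbert space. *)

theory Defs
  imports "HOL-Analysis.Analysis"
begin

text \<open>A complex Hilbert space is modelled as a real Hilbert space 'h (class real_inner
  + complete_space) together with a complex structure J: a bounded real-linear map with
  J (J x) = -x that preserves the real inner product. Then i acts as J and the complex
  inner product is determined by the real one.\<close>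

definition cplx_structure :: "('h::real_inner \<Rightarrow>\<^sub>L 'h) \<Rightarrow> bool" where
  "cplx_structure J \<longleftrightarrow> (\<forall>x. blinfun_apply J (blinfun_apply J x) = - x) \<and>
     (\<forall>x y. inner (blinfun_apply J x) (blinfun_apply J y) = inner x y)"

text \<open>Multiplication by the complex scalar c, as an operator: c I.\<close>
definition cscal :: "('h::real_normed_vector \<Rightarrow>\<^sub>L 'h) \<Rightarrow> complex \<Rightarrow> ('h \<Rightarrow>\<^sub>L 'h)" where
  "cscal J c = Re c *\<^sub>R id_blinfun + Im c *\<^sub>R J"

text \<open>B(H): bounded complex-linear operators = bounded real-linear operators commuting with J.\<close>
definition is_Bop :: "('h::real_normed_vector \<Rightarrow>\<^sub>L 'h) \<Rightarrow> ('h \<Rightarrow>\<^sub>L 'h) \<Rightarrow> bool" where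
  "is_Bop J A \<longleftrightarrow> A o\<^sub>L J = J o\<^sub>L A"

definition sup_norm :: "(complex \<Rightarrow> 'b::real_normed_vector) \<Rightarrow> real" where
  "sup_norm f = (SUP z\<in>ball 0 1. norm (f z))"

definition admissible ::
  "('h::real_normed_vector \<Rightarrow>\<^sub>L 'h) \<Rightarrow> (nat \<Rightarrow> ('h \<Rightarrow>\<^sub>L 'h)) \<Rightarrow> (complex \<Rightarrow> ('h \<Rightarrow>\<^sub>L 'h)) \<Rightarrow> bool" where
  "admissible J A f \<longleftrightarrow> (\<forall>n. is_Bop J (A n)) \<and>
     (\<forall>z\<in>ball 0 1. (\<lambda>n. cscal J (z ^ n) o\<^sub>L A n) sums f z) \<and>
     bounded (f ` ball 0 1) \<and>
     (\<exists>a0. A 0 = cscal J a0)"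

end

theory Submission
  imports Defs "HOL-Complex_Analysis.Riemann_Mapping"
begin

(*
  Fix n \<ge> 1, a unit vector x and a vector u, put M = \<parallel>f\<parallel>\<^sub>\<infinity>, c = A\<^sub>n x + a u,
  V z = x + z\<^sup>n u and Q z = a x + z\<^sup>n c; Q collects the terms of degree 0 and n of f(z) V(z).
  Averaging 2 Re \<langle>f(z) V(z), Q z\<rangle> - \<parallel>Q z\<parallel>\<^sup>2 \<le> \<parallel>f(z) V(z)\<parallel>\<^sup>2 \<le> M\<^sup>2 \<parallel>V z\<parallel>\<^sup>2 over the
  N-th roots of unity on the circle of radius \<rho>, letting N \<rightarrow> \<infinity> and then \<rho> \<rightarrow> 1 gives
  \<bar>a\<bar>\<^sup>2 + \<parallel>A\<^sub>n x + a u\<parallel>\<^sup>2 \<le> M\<^sup>2 (1 + \<parallel>u\<parallel>\<^sup>2). Optimising over u yields the Wiener-type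
  bound \<parallel>A\<^sub>n\<parallel> \<le> (M\<^sup>2 - \<bar>a\<bar>\<^sup>2) / M, and summing the geometric series for r \<le> 1/3 gives
  \<Sum> \<parallel>A\<^sub>n\<parallel> r\<^sup>n \<le> M - (M - \<bar>a\<bar>)\<^sup>2 / (2 M). This is < M unless \<bar>a\<bar> = M, in which case all
  A\<^sub>n with n \<ge> 1 vanish and f is constant. For r > 1/3 the scalar Moebius maps
  (b - z) / (1 - b z) times the identity, with b close to 1, violate the inequality.
*)

section \<open>Means over roots of unity\<close>

definition root_unity :: "nat \<Rightarrow> nat \<Rightarrow> complex" where
  "root_unity N j = cis (2 * pi * real j / real N)"

lemma norm_root_unity [simp]: "norm (root_unity N j) = 1"
  by (simp add: root_unity_def)

lemma sum_root_unity_power_cnj: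
  assumes N: "N > 0"
  shows "(\<Sum>j<N. root_unity N j ^ p * cnj (root_unity N j) ^ q)
           = (if int N dvd int p - int q then of_nat N else 0)"
proof -
  define \<omega> where "\<omega> = cis (2 * pi * (real p - real q) / real N)"
  have power: "root_unity N j ^ p * cnj (root_unity N j) ^ q = \<omega> ^ j" for j
  proof -
    have "root_unity N j ^ p * cnj (root_unity N j) ^ q
        = cis (real p * (2 * pi * real j / real N)) * cis (real q * - (2 * pi * real j / real N))"
      unfolding root_unity_def cis_cnj Complex.DeMoivre ..
    also have "\<dots> = cis (real j * (2 * pi * (real p - real q) / real N))"
      by (simp add: cis_mult algebra_simps diff_divide_distrib)
    finally show ?thesis by (simp add: \<omega>_def Complex.DeMoivre)
  qed
  have \<omega>_eq_1: "\<omega> = 1 \<longleftrightarrow> int N dvd int p - int q"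
  proof
    assume "\<omega> = 1"
    then obtain k :: int where "2 * pi * (real p - real q) / real N = of_int k * 2 * pi"
      by (auto simp: \<omega>_def complex_eq_iff cos_one_2pi_int)
    then have "(real p - real q) * (2 * pi) = (of_int k * real N) * (2 * pi)"
      using N by (simp add: field_simps)
    then have "real_of_int (int p - int q) = real_of_int (k * int N)"
      by simp
    then show "int N dvd int p - int q"
      by (simp only: of_int_eq_iff) simp
  next
    assume "int N dvd int p - int q"
    then obtain k where "int p - int q = int N * k" by blast
    then have "real p - real q = real N * of_int k"
      by (metis of_int_of_nat_eq of_int_diff of_int_mult)
    then show "\<omega> = 1"
      using N by (simp add: \<omega>_def flip: mult.assoc)
  qed
  have "\<omega> ^ N = cis (2 * pi * (real p - real q))"
    using N by (simp add: \<omega>_def Complex.DeMoivre)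
  also have "\<dots> = 1"
    by (rule cis_multiple_2pi) (metis Ints_diff Ints_of_nat)
  finally have "\<omega> ^ N = 1" .
  then show ?thesis
    using geometric_sum[of \<omega> N] by (auto simp: power simp flip: \<omega>_eq_1)
qed

definition circle_mean :: "real \<Rightarrow> nat \<Rightarrow> (complex \<Rightarrow> 'a::real_vector) \<Rightarrow> 'a" where
  "circle_mean \<rho> N g = (\<Sum>j<N. g (of_real \<rho> * root_unity N j)) /\<^sub>R real N"

lemma circle_mean_add:
  "circle_mean \<rho> N (\<lambda>z. g z + h z) = circle_mean \<rho> N g + circle_mean \<rho> N h"
  by (simp add: circle_mean_def sum.distrib scaleR_add_right)

lemma circle_mean_mult_left:
  fixes g :: "complex \<Rightarrow> 'a::real_algebra"
  shows "circle_mean \<rho> N (\<lambda>z. c * g z) = c * circle_mean \<rho> N g"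
  by (simp add: circle_mean_def sum_distrib_left)

lemma circle_mean_const: "N > 0 \<Longrightarrow> circle_mean \<rho> N (\<lambda>z. c) = c"
  by (simp add: circle_mean_def sum_constant_scaleR)

lemma Re_circle_mean: "Re (circle_mean \<rho> N g) = circle_mean \<rho> N (\<lambda>z. Re (g z))"
  by (simp add: circle_mean_def Re_sum)

lemma circle_mean_mono:
  fixes g h :: "complex \<Rightarrow> real"
  assumes "0 \<le> \<rho>" "\<And>z. cmod z = \<rho> \<Longrightarrow> g z \<le> h z"
  shows "circle_mean \<rho> N g \<le> circle_mean \<rho> N h"
  unfolding circle_mean_def using assms
  by (auto intro!: mult_left_mono sum_mono simp: norm_mult)

lemma circle_mean_cong:
  assumes "0 \<le> \<rho>" "\<And>z. cmod z = \<rho> \<Longrightarrow> g z = h z"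
  shows "circle_mean \<rho> N g = circle_mean \<rho> N h"
  unfolding circle_mean_def using assms by (auto intro!: sum.cong simp: norm_mult)

lemma circle_mean_power_cnj:
  "N > 0 \<Longrightarrow> circle_mean \<rho> N (\<lambda>z. z ^ p * cnj z ^ q)
     = of_real (\<rho> ^ (p + q)) * (if int N dvd int p - int q then 1 else 0)"
  by (simp add: circle_mean_def power_mult_distrib power_add sum_distrib_left mult_ac
      sum_root_unity_power_cnj scaleR_conv_of_real flip: sum_distrib_left)

lemma circle_mean_suminf:
  fixes F :: "nat \<Rightarrow> complex \<Rightarrow> 'a::real_normed_vector"
  assumes "0 \<le> \<rho>" "\<And>z. cmod z = \<rho> \<Longrightarrow> summable (\<lambda>k. F k z)"
  shows "circle_mean \<rho> N (\<lambda>z. \<Sum>k. F k z) = (\<Sum>k. circle_mean \<rho> N (F k))"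
proof -
  have summable: "summable (\<lambda>k. F k (of_real \<rho> * root_unity N j))" for j
    using assms by (simp add: norm_mult)
  have "(\<Sum>j<N. \<Sum>k. F k (of_real \<rho> * root_unity N j)) = (\<Sum>k. \<Sum>j<N. F k (of_real \<rho> * root_unity N j))"
    by (subst suminf_sum) (auto intro: summable)
  then show ?thesis
    unfolding circle_mean_def
    by (simp add: suminf_scaleR_right summable_sum summable)
qed

lemma circle_mean_power_series:
  fixes c :: "nat \<Rightarrow> complex"
  assumes \<rho>: "0 \<le> \<rho>" and N: "N > 0" and \<phi>: "\<And>z. cmod z = \<rho> \<Longrightarrow> (\<lambda>k. c k * z ^ k) sums \<phi> z"
  shows "circle_mean \<rho> N (\<lambda>z. z ^ l * cnj z ^ m * \<phi> z)
           = (\<Sum>k. c k * of_real (\<rho> ^ (k + l + m)) * (if int N dvd int (k + l) - int m then 1 else 0))"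
proof -
  have "z ^ l * cnj z ^ m * \<phi> z = (\<Sum>k. c k * (z ^ (k + l) * cnj z ^ m))" if "cmod z = \<rho>" for z
    using sums_unique[OF sums_mult[OF \<phi>[OF that], of "z ^ l * cnj z ^ m"]]
    by (simp add: power_add algebra_simps)
  then have "circle_mean \<rho> N (\<lambda>z. z ^ l * cnj z ^ m * \<phi> z)
      = circle_mean \<rho> N (\<lambda>z. \<Sum>k. c k * (z ^ (k + l) * cnj z ^ m))"
    by (rule circle_mean_cong[OF \<rho>])
  also have "\<dots> = (\<Sum>k. circle_mean \<rho> N (\<lambda>z. c k * (z ^ (k + l) * cnj z ^ m)))"
  proof (rule circle_mean_suminf[OF \<rho>])
    fix z :: complex assume "cmod z = \<rho>"
    then show "summable (\<lambda>k. c k * (z ^ (k + l) * cnj z ^ m))"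
      using sums_summable[OF sums_mult[OF \<phi>, of z "z ^ l * cnj z ^ m"]]
      by (simp add: power_add algebra_simps)
  qed
  finally show ?thesis
    using N by (simp add: circle_mean_mult_left circle_mean_power_cnj mult.assoc)
qed

lemma int_dvd_diff_imp_eq:
  fixes p q N :: nat
  assumes "int N dvd int p - int q" "p < N" "q < N"
  shows "p = q"
proof -
  have "\<bar>int p - int q\<bar> < int N"
    using assms(2,3) by auto
  then show ?thesis
    using dvd_imp_le_int[OF _ assms(1)] by fastforce
qed

lemma sums_if_add_eq: "(\<lambda>k. if k + l = m then a k else 0) sums (if l \<le> m then a (m - l) else 0)"
proof (cases "l \<le> m")
  case True
  then have "(\<lambda>k. if k + l = m then a k else 0) = (\<lambda>k. if k = m - l then a (m - l) else 0)"
    by (auto simp: fun_eq_iff)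
  then show ?thesis
    using True sums_single[of "m - l" "\<lambda>_. a (m - l)"] by simp
qed simp

(* A discrete Cauchy formula: the mean over N-th roots of unity picks out the coefficient of
   index m - l, up to aliased coefficients of index at least N - l, which vanish as N \<rightarrow> \<infinity>. *)
lemma circle_mean_coeff_error_le:
  fixes c :: "nat \<Rightarrow> complex"
  assumes summable: "summable (\<lambda>k. norm (c k) * \<rho> ^ k)" and \<rho>: "0 \<le> \<rho>"
    and \<phi>: "\<And>z. cmod z = \<rho> \<Longrightarrow> (\<lambda>k. c k * z ^ k) sums \<phi> z" and K: "m < K"
  shows "norm (circle_mean \<rho> (K + l) (\<lambda>z. z ^ l * cnj z ^ m * \<phi> z)
                - (if l \<le> m then c (m - l) * of_real (\<rho> ^ (2 * m)) else 0))
           \<le> \<rho> ^ (l + m) * (\<Sum>i. norm (c (i + K)) * \<rho> ^ (i + K))"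
    (is "norm (?mean - ?target) \<le> _")
proof -
  define a where "a k = c k * of_real (\<rho> ^ (k + l + m))" for k
  define d where "d k = (if int (K + l) dvd int (k + l) - int m then a k else 0)
                      - (if k + l = m then a k else 0)" for k
  have norm_a: "norm (a k) = \<rho> ^ (l + m) * (norm (c k) * \<rho> ^ k)" for k
    using \<rho> by (simp add: a_def norm_mult norm_power power_add)
  have summable_a: "summable (\<lambda>k. norm (a k))"
    unfolding norm_a by (intro summable_mult summable)
  have target: "(\<lambda>k. if k + l = m then a k else 0) sums ?target"
    using sums_if_add_eq[of l m a] by (simp add: a_def mult_2 cong: if_cong)
  have "?mean = (\<Sum>k. if int (K + l) dvd int (k + l) - int m then a k else 0)"
    using K by (subst circle_mean_power_series[OF \<rho> _ \<phi>]) (auto simp: a_def intro!: suminf_cong)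
  then have "?mean - ?target = suminf d"
    unfolding d_def using sums_unique[OF target]
    by (simp add: suminf_diff summable_comparison_test[OF _ summable_a] sums_summable[OF target])
  also have "\<dots> = (\<Sum>i. d (i + K))"
  proof -
    have "d k = 0" if "k < K" for k
      using that K int_dvd_diff_imp_eq[of "K + l" "k + l" m] by (auto simp: d_def)
    moreover have "summable d"
      by (rule summable_comparison_test[OF _ summable_a]) (auto simp: d_def)
    ultimately show ?thesis
      using suminf_split_initial_segment[of d K] by simp
  qed
  also have "norm \<dots> \<le> (\<Sum>i. \<rho> ^ (l + m) * (norm (c (i + K)) * \<rho> ^ (i + K)))"
  proof (rule norm_suminf_le)
    show "norm (d (i + K)) \<le> \<rho> ^ (l + m) * (norm (c (i + K)) * \<rho> ^ (i + K))" for i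
      by (simp add: d_def norm_a[symmetric])
    show "summable (\<lambda>i. \<rho> ^ (l + m) * (norm (c (i + K)) * \<rho> ^ (i + K)))"
      by (intro summable_mult summable_ignore_initial_segment summable)
  qed
  also have "\<dots> = \<rho> ^ (l + m) * (\<Sum>i. norm (c (i + K)) * \<rho> ^ (i + K))"
    by (intro suminf_mult summable_ignore_initial_segment summable)
  finally show ?thesis .
qed

lemma circle_mean_tendsto_coeff:
  fixes c :: "nat \<Rightarrow> complex"
  assumes summable: "summable (\<lambda>k. norm (c k) * \<rho> ^ k)" and \<rho>: "0 \<le> \<rho>"
    and \<phi>: "\<And>z. cmod z = \<rho> \<Longrightarrow> (\<lambda>k. c k * z ^ k) sums \<phi> z"
  shows "(\<lambda>N. circle_mean \<rho> N (\<lambda>z. z ^ l * cnj z ^ m * \<phi> z))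
           \<longlonglongrightarrow> (if l \<le> m then c (m - l) * of_real (\<rho> ^ (2 * m)) else 0)"
    (is "(\<lambda>N. ?mean N) \<longlonglongrightarrow> ?target")
proof -
  have "(\<lambda>K. \<rho> ^ (l + m) * (\<Sum>i. norm (c (i + K)) * \<rho> ^ (i + K))) \<longlonglongrightarrow> 0"
    by (intro tendsto_mult_right_zero suminf_exist_split2 summable)
  then have tail: "(\<lambda>n. \<rho> ^ (l + m) * (\<Sum>i. norm (c (i + (n + Suc m))) * \<rho> ^ (i + (n + Suc m))))
      \<longlonglongrightarrow> 0"
    by (rule LIMSEQ_ignore_initial_segment)
  have error: "norm (?mean (n + Suc m + l) - ?target)
      \<le> \<rho> ^ (l + m) * (\<Sum>i. norm (c (i + (n + Suc m))) * \<rho> ^ (i + (n + Suc m)))" for n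
    using circle_mean_coeff_error_le[OF summable \<rho> \<phi>, of m "n + Suc m" l] by simp
  have "(\<lambda>n. ?mean (n + Suc m + l) - ?target) \<longlonglongrightarrow> 0"
    using Lim_null_comparison[OF always_eventually[OF allI[OF error]] tail] .
  then have "(\<lambda>n. ?mean (n + (Suc m + l))) \<longlonglongrightarrow> ?target"
    by (simp add: LIM_zero_cancel add.assoc)
  then show ?thesis
    by (rule LIMSEQ_offset)
qed

lemma two_inner_le_norm_power2:
  fixes p q :: "'a::real_inner"
  shows "2 * inner p q \<le> norm p ^ 2 + norm q ^ 2"
proof -
  have "0 \<le> inner (p - q) (p - q)"
    by simp
  then show ?thesis
    by (simp add: inner_diff_left inner_diff_right power2_norm_eq_inner inner_commute)
qed

lemma norm_blinfun_le_unit: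
  fixes B :: "'a::real_normed_vector \<Rightarrow>\<^sub>L 'b::real_normed_vector"
  assumes "0 \<le> b" "\<And>x. norm x = 1 \<Longrightarrow> norm (B x) \<le> b"
  shows "norm B \<le> b"
proof (rule norm_blinfun_bound[OF assms(1)])
  fix x :: 'a
  show "norm (B x) \<le> b * norm x"
  proof (cases "x = 0")
    case False
    have "norm (B x) = norm x * norm (B (x /\<^sub>R norm x))"
      using False by (simp add: blinfun.scaleR_right)
    also have "\<dots> \<le> norm x * b"
      using False by (intro mult_left_mono assms(2)) auto
    finally show ?thesis
      by (simp add: mult.commute)
  qed (simp add: blinfun.zero_right)
qed

(* With \<alpha> = \<bar>a\<bar> and \<beta> = \<parallel>A\<^sub>n x\<parallel>, the hypothesis is the coefficient inequality for the
   optimal test vector u. *)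
lemma mult_le_of_optimized_bound:
  fixes \<alpha> \<beta> M :: real
  assumes "0 < \<alpha>" "\<alpha> < M"
    and bound: "\<alpha>^2 + (M^2 / (M^2 - \<alpha>^2) * \<beta>)^2 \<le> M^2 * (1 + (\<alpha> / (M^2 - \<alpha>^2) * \<beta>)^2)"
  shows "M * \<beta> \<le> M^2 - \<alpha>^2"
proof -
  define D where "D = M^2 - \<alpha>^2"
  have D: "0 < D"
    using assms by (simp add: D_def power_strict_mono)
  have "(M^2 / D * \<beta>)^2 = M^4 * \<beta>^2 / D^2" "(\<alpha> / D * \<beta>)^2 = \<alpha>^2 * \<beta>^2 / D^2"
    by (simp_all add: power_mult_distrib power_divide flip: power_mult)
  with bound have "\<alpha>^2 + M^4 * \<beta>^2 / D^2 \<le> M^2 * (1 + \<alpha>^2 * \<beta>^2 / D^2)"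
    by (simp only: D_def)
  then have "D^2 * (\<alpha>^2 + M^4 * \<beta>^2 / D^2) \<le> D^2 * (M^2 * (1 + \<alpha>^2 * \<beta>^2 / D^2))"
    by (rule mult_left_mono) simp
  then have "\<alpha>^2 * D^2 + M^4 * \<beta>^2 \<le> M^2 * D^2 + M^2 * \<alpha>^2 * \<beta>^2"
    using D by (simp add: distrib_left distrib_right mult_ac)
  then have "(M * \<beta>)^2 * (M^2 - \<alpha>^2) \<le> D^2 * (M^2 - \<alpha>^2)"
    by (simp add: power2_eq_square power4_eq_xxxx algebra_simps)
  then have "(M * \<beta>)^2 \<le> D^2"
    using D by (simp only: D_def[symmetric] mult_le_cancel_right_pos)
  then have "M * \<beta> \<le> D"
    by (rule power2_le_imp_le) (use D in simp)
  then show ?thesis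
    by (simp add: D_def)
qed

lemma power_series_le_one_third:
  fixes b :: "nat \<Rightarrow> real"
  assumes summable: "summable (\<lambda>n. b n * r ^ n)" and r: "0 \<le> r" "r \<le> 1/3"
    and C: "0 \<le> C" "\<And>n. 0 < n \<Longrightarrow> b n \<le> C"
  shows "(\<Sum>n. b n * r ^ n) \<le> b 0 + C / 2"
proof -
  have geometric: "(\<lambda>k. C * r * r ^ k) sums (C * r / (1 - r))"
    using r sums_mult[OF geometric_sums[of r], of "C * r"] by (simp add: field_simps)
  have "(\<Sum>k. b (Suc k) * r ^ Suc k) \<le> (\<Sum>k. C * r * r ^ k)"
  proof (rule suminf_le)
    show "b (Suc k) * r ^ Suc k \<le> C * r * r ^ k" for k
      using C(2)[of "Suc k"] r by (simp add: mult_right_mono mult.assoc)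
    show "summable (\<lambda>k. b (Suc k) * r ^ Suc k)"
      using summable by (subst summable_Suc_iff)
  qed (rule sums_summable[OF geometric])
  also have "\<dots> = C * (r / (1 - r))"
    using sums_unique[OF geometric] by simp
  also have "\<dots> \<le> C * (1 / 2)"
    using r C by (intro mult_left_mono) (auto simp: field_simps)
  finally show ?thesis
    using suminf_split_head[OF summable] by simp
qed

lemma norm_le_sup_norm:
  assumes "admissible J A f" "z \<in> ball 0 1"
  shows "norm (f z) \<le> sup_norm f"
proof -
  have "bounded (f ` ball 0 1)"
    using assms by (simp add: admissible_def)
  then have "bdd_above ((\<lambda>z. norm (f z)) ` ball 0 1)"
    by (auto simp: bounded_iff bdd_above_def)
  then show ?thesis
    unfolding sup_norm_def using assms(2) by (rule cSUP_upper2) simp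
qed

lemma sup_norm_nonneg: "admissible J A f \<Longrightarrow> 0 \<le> sup_norm f"
  using norm_le_sup_norm[of J A f 0] by (meson centre_in_ball norm_ge_zero order_trans zero_less_one)

section \<open>Hilbert spaces with a complex structure\<close>

locale complex_structure =
  fixes J :: "'h::real_inner \<Rightarrow>\<^sub>L 'h"
  assumes cplx_structure_J: "cplx_structure J"
begin

lemma J_J [simp]: "J (J x) = - x"
  using cplx_structure_J by (simp add: cplx_structure_def)

lemma inner_J_J [simp]: "inner (J x) (J y) = inner x y"
  using cplx_structure_J by (simp add: cplx_structure_def)

lemma inner_J_left: "inner (J p) q = - inner p (J q)"
  using inner_J_J[of "J p" q] by simp

lemma inner_J_self [simp]: "inner p (J p) = 0"
  using inner_J_left[of p p] by (simp add: inner_commute)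

definition cmult :: "complex \<Rightarrow> 'h \<Rightarrow> 'h" where
  "cmult c p = Re c *\<^sub>R p + Im c *\<^sub>R J p"

definition cinner :: "'h \<Rightarrow> 'h \<Rightarrow> complex" where
  "cinner p q = Complex (inner p q) (inner p (J q))"

lemma cscal_apply [simp]: "cscal J c p = cmult c p"
  by (simp add: cscal_def cmult_def plus_blinfun.rep_eq scaleR_blinfun.rep_eq)

lemma J_cmult: "J (cmult c p) = cmult c (J p)"
  by (simp add: cmult_def blinfun.add_right blinfun.scaleR_right)

lemma cmult_zero_left [simp]: "cmult 0 p = 0"
  by (simp add: cmult_def)

lemma cmult_zero_right [simp]: "cmult c 0 = 0"
  by (simp add: cmult_def blinfun.zero_right)

lemma cmult_one [simp]: "cmult 1 p = p"
  by (simp add: cmult_def)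

lemma cmult_cmult [simp]: "cmult c (cmult d p) = cmult (c * d) p"
  by (simp add: cmult_def blinfun.add_right blinfun.scaleR_right algebra_simps)

lemma cmult_of_real [simp]: "cmult (of_real r) p = r *\<^sub>R p"
  by (simp add: cmult_def)

lemma is_Bop_apply_J:
  assumes "is_Bop J B"
  shows "B (J p) = J (B p)"
proof -
  have "(B o\<^sub>L J) p = (J o\<^sub>L B) p"
    using assms by (simp add: is_Bop_def)
  then show ?thesis
    by simp
qed

lemma is_Bop_apply_cmult: "is_Bop J B \<Longrightarrow> B (cmult c p) = cmult c (B p)"
  by (simp add: cmult_def blinfun.add_right blinfun.scaleR_right is_Bop_apply_J)

lemma Re_cinner: "Re (cinner p q) = inner p q"
  by (simp add: cinner_def)

lemma cinner_add_left: "cinner (p + q) r = cinner p r + cinner q r"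
  by (simp add: cinner_def complex_eq_iff inner_add_left)

lemma cinner_add_right: "cinner p (q + r) = cinner p q + cinner p r"
  by (simp add: cinner_def complex_eq_iff inner_add_right blinfun.add_right)

lemma cinner_cmult_left: "cinner (cmult c p) q = c * cinner p q"
  by (simp add: cinner_def cmult_def complex_eq_iff inner_add_left inner_J_left algebra_simps)

lemma cinner_cmult_right: "cinner p (cmult c q) = cnj c * cinner p q"
  by (simp add: cinner_def cmult_def complex_eq_iff inner_add_right blinfun.add_right
      blinfun.scaleR_right algebra_simps)

lemma cinner_self: "cinner p p = of_real (norm p ^ 2)"
  by (simp add: cinner_def complex_eq_iff power2_norm_eq_inner)

lemma norm_cmult: "norm (cmult c p) = cmod c * norm p"
proof -
  have "norm (cmult c p) ^ 2 = Re (cinner (cmult c p) (cmult c p))"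
    by (simp add: Re_cinner power2_norm_eq_inner)
  also have "\<dots> = Re (c * cnj c * cinner p p)"
    by (simp only: cinner_cmult_left cinner_cmult_right ac_simps)
  also have "\<dots> = (cmod c * norm p) ^ 2"
    by (simp add: cinner_self power_mult_distrib flip: complex_norm_square)
  finally show ?thesis
    by (simp add: power2_eq_iff_nonneg)
qed

lemma norm_cinner_le: "cmod (cinner p q) \<le> norm p * norm q"
proof (cases "cinner p q = 0")
  case False
  define c where "c = cnj (cinner p q) / cmod (cinner p q)"
  have "cmod (cinner p q) = Re (c * cinner p q)"
    using False by (simp add: c_def mult.commute power2_eq_square flip: complex_norm_square)
  also have "\<dots> = inner (cmult c p) q"
    by (simp add: Re_cinner flip: cinner_cmult_left)
  also have "\<dots> \<le> norm (cmult c p) * norm q"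
    by (rule norm_cauchy_schwarz)
  also have "\<dots> = norm p * norm q"
    using False by (simp add: norm_cmult c_def norm_divide)
  finally show ?thesis .
qed simp

lemma norm_cscal_compose: "norm (cscal J c o\<^sub>L B) = cmod c * norm B"
proof (rule antisym)
  show "norm (cscal J c o\<^sub>L B) \<le> cmod c * norm B"
  proof (rule norm_blinfun_bound)
    fix x
    have "norm ((cscal J c o\<^sub>L B) x) = cmod c * norm (B x)"
      by (simp add: norm_cmult)
    also have "\<dots> \<le> cmod c * (norm B * norm x)"
      by (intro mult_left_mono norm_blinfun) simp
    finally show "norm ((cscal J c o\<^sub>L B) x) \<le> cmod c * norm B * norm x"
      by (simp add: mult.assoc)
  qed simp
  show "cmod c * norm B \<le> norm (cscal J c o\<^sub>L B)"
  proof (cases "c = 0")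
    case False
    have "norm B \<le> norm (cscal J c o\<^sub>L B) / cmod c"
    proof (rule norm_blinfun_bound)
      fix x
      have "cmod c * norm (B x) = norm ((cscal J c o\<^sub>L B) x)"
        by (simp add: norm_cmult)
      also have "\<dots> \<le> norm (cscal J c o\<^sub>L B) * norm x"
        by (rule norm_blinfun)
      finally show "norm (B x) \<le> norm (cscal J c o\<^sub>L B) / cmod c * norm x"
        using False by (simp add: field_simps)
    qed simp
    then show ?thesis
      using False by (simp add: field_simps)
  qed simp
qed

lemma norm_add_cmult_power2:
  "norm (y + cmult w v) ^ 2 = norm y ^ 2 + cmod w ^ 2 * norm v ^ 2 + 2 * Re (cnj w * cinner y v)"
proof -
  have "norm (y + cmult w v) ^ 2 = norm y ^ 2 + norm (cmult w v) ^ 2 + 2 * inner y (cmult w v)"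
    by (simp add: power2_norm_eq_inner inner_add_left inner_add_right inner_commute)
  moreover have "inner y (cmult w v) = Re (cnj w * cinner y v)"
    by (simp flip: Re_cinner cinner_cmult_right)
  ultimately show ?thesis
    by (simp add: norm_cmult power_mult_distrib)
qed

lemma circle_mean_norm_add_cmult_power2:
  assumes "0 \<le> \<rho>" "0 < n" "n < N"
  shows "circle_mean \<rho> N (\<lambda>z. norm (y + cmult (z ^ n) v) ^ 2) = norm y ^ 2 + \<rho> ^ (2 * n) * norm v ^ 2"
proof -
  have "circle_mean \<rho> N (\<lambda>z. norm (y + cmult (z ^ n) v) ^ 2)
      = circle_mean \<rho> N (\<lambda>z. (norm y ^ 2 + \<rho> ^ (2 * n) * norm v ^ 2) + 2 * Re (cinner y v * (z ^ 0 * cnj z ^ n)))"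
    by (rule circle_mean_cong[OF assms(1)])
      (simp add: norm_add_cmult_power2 norm_power power_even_eq mult.commute[of "cinner y v"])
  also have "\<dots> = (norm y ^ 2 + \<rho> ^ (2 * n) * norm v ^ 2)
                  + 2 * Re (cinner y v * circle_mean \<rho> N (\<lambda>z. z ^ 0 * cnj z ^ n))"
    using assms by (simp only: circle_mean_add circle_mean_const circle_mean_mult_left
        flip: Re_circle_mean)
  also have "circle_mean \<rho> N (\<lambda>z. z ^ 0 * cnj z ^ n) = 0"
    using assms circle_mean_power_cnj[of N \<rho> 0 n] int_dvd_diff_imp_eq[of N 0 n] by auto
  finally show ?thesis by simp
qed

section \<open>Admissible functions and the coefficient inequality\<close>

lemma admissible_apply_sums:
  assumes "admissible J A f" "z \<in> ball 0 1"
  shows "(\<lambda>k. cmult (z ^ k) (A k v)) sums f z v"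
proof -
  have "(\<lambda>k. cscal J (z ^ k) o\<^sub>L A k) sums f z"
    using assms by (simp add: admissible_def)
  from bounded_linear.sums[OF blinfun.bounded_linear_left this, of v] show ?thesis
    by simp
qed

lemma admissible_cinner_sums:
  assumes "admissible J A f" "z \<in> ball 0 1"
  shows "(\<lambda>k. cinner (A k v) y * z ^ k) sums cinner (f z v) y"
proof -
  note sums = admissible_apply_sums[OF assms, of v]
  have "(\<lambda>k. cinner (cmult (z ^ k) (A k v)) y) sums cinner (f z v) y"
    unfolding sums_complex_iff
    by (auto simp: cinner_def intro: bounded_linear.sums[OF bounded_linear_inner_left sums])
  then show ?thesis
    by (simp add: cinner_cmult_left mult.commute)
qed

lemma is_Bop_admissible_apply:
  assumes "admissible J A f" "z \<in> ball 0 1"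
  shows "is_Bop J (f z)"
proof -
  define S where "S n = (\<Sum>k<n. cscal J (z ^ k) o\<^sub>L A k)" for n
  have S: "S \<longlonglongrightarrow> f z"
    using assms unfolding admissible_def sums_def S_def by simp
  have A: "is_Bop J (A k)" for k
    using assms by (simp add: admissible_def)
  have "is_Bop J (S n)" for n
    unfolding is_Bop_def S_def
    by (intro blinfun_eqI) (simp add: blinfun.sum_left blinfun.sum_right is_Bop_apply_J[OF A] J_cmult)
  then have "(\<lambda>n. S n o\<^sub>L J) \<longlonglongrightarrow> (J o\<^sub>L f z)"
    unfolding is_Bop_def by (auto intro!: tendsto_intros S)
  moreover have "(\<lambda>n. S n o\<^sub>L J) \<longlonglongrightarrow> (f z o\<^sub>L J)"
    by (intro tendsto_intros S)
  ultimately show ?thesis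
    unfolding is_Bop_def by (rule LIMSEQ_unique[symmetric])
qed

lemma admissible_summable:
  assumes adm: "admissible J A f" and \<rho>: "0 \<le> \<rho>" "\<rho> < 1"
  shows "summable (\<lambda>k. norm (A k) * \<rho> ^ k)"
proof -
  define r where "r = (1 + \<rho>) / 2"
  have r: "\<rho> < r" "r < 1"
    using \<rho> by (auto simp: r_def)
  have "(\<lambda>k. cscal J (of_real r ^ k) o\<^sub>L A k) sums f (of_real r)"
    using adm r \<rho> by (simp add: admissible_def)
  then have "(\<lambda>k. cscal J (of_real r ^ k) o\<^sub>L A k) \<longlonglongrightarrow> 0"
    by (intro summable_LIMSEQ_zero sums_summable)
  then have "Bseq (\<lambda>k. cscal J (of_real r ^ k) o\<^sub>L A k)"
    by (intro convergent_imp_Bseq convergentI)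
  then obtain K where "norm (cscal J (of_real r ^ k) o\<^sub>L A k) \<le> K" for k
    by (auto simp: Bseq_def)
  then have "norm (A k) * r ^ k \<le> K" for k
    using \<rho> r by (simp add: norm_cscal_compose norm_power mult.commute)
  then show ?thesis
    using \<rho> r by (intro Abel_lemma) auto
qed

lemma admissible_const:
  assumes adm: "admissible J A f" and A: "\<And>n. 0 < n \<Longrightarrow> A n = 0" and z: "z \<in> ball 0 1"
  shows "f z = A 0"
proof -
  have "(\<lambda>k. cscal J (z ^ k) o\<^sub>L A k) = (\<lambda>k. if k = 0 then A 0 else 0)"
    using A by (auto simp: fun_eq_iff intro: blinfun_eqI)
  moreover have "(\<lambda>k. cscal J (z ^ k) o\<^sub>L A k) sums f z"
    using adm z by (simp add: admissible_def)
  ultimately show ?thesis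
    using sums_single[of 0 "\<lambda>_. A 0"] sums_unique2 by fastforce
qed

lemma circle_mean_cinner_tendsto:
  assumes adm: "admissible J A f" and \<rho>: "0 \<le> \<rho>" "\<rho> < 1"
  shows "(\<lambda>N. circle_mean \<rho> N (\<lambda>z. z ^ l * cnj z ^ m * cinner (f z v) y))
           \<longlonglongrightarrow> (if l \<le> m then cinner (A (m - l) v) y * of_real (\<rho> ^ (2 * m)) else 0)"
proof (rule circle_mean_tendsto_coeff)
  have "norm (cinner (A k v) y) * \<rho> ^ k \<le> norm v * norm y * (norm (A k) * \<rho> ^ k)" for k
  proof -
    have "norm (cinner (A k v) y) \<le> norm (A k) * norm v * norm y"
      by (rule order_trans[OF norm_cinner_le]) (simp add: mult_right_mono norm_blinfun)
    then have "norm (cinner (A k v) y) * \<rho> ^ k \<le> norm (A k) * norm v * norm y * \<rho> ^ k"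
      using \<rho> by (simp add: mult_right_mono)
    then show ?thesis
      by (simp only: ac_simps)
  qed
  then show "summable (\<lambda>k. norm (cinner (A k v) y) * \<rho> ^ k)"
    using \<rho> by (intro summable_comparison_test'[OF summable_mult[OF admissible_summable[OF adm]]]) auto
  show "(\<lambda>k. cinner (A k v) y * z ^ k) sums cinner (f z v) y" if "cmod z = \<rho>" for z
    using that \<rho> by (intro admissible_cinner_sums[OF adm]) simp
qed (use \<rho> in simp)

lemma two_Re_cinner_le_sup_norm:
  assumes "admissible J A f" "z \<in> ball 0 1"
  shows "2 * Re (cinner (f z v) q) \<le> sup_norm f ^ 2 * norm v ^ 2 + norm q ^ 2"
proof -
  have "norm (f z v) \<le> sup_norm f * norm v"
    using norm_blinfun[of "f z" v] norm_le_sup_norm[OF assms]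
    by (meson mult_right_mono norm_ge_zero order_trans)
  then have "norm (f z v) ^ 2 \<le> sup_norm f ^ 2 * norm v ^ 2"
    by (metis norm_ge_zero power_mono power_mult_distrib)
  then show ?thesis
    using two_inner_le_norm_power2[of "f z v" q] by (simp add: Re_cinner)
qed

lemma circle_mean_test_vector_tendsto:
  fixes u :: 'h
  assumes adm: "admissible J A f" and A0: "A 0 = cscal J a" and n: "0 < n"
    and \<rho>: "0 \<le> \<rho>" "\<rho> < 1" and x: "norm x = 1"
  defines "c \<equiv> A n x + cmult a u"
  shows "(\<lambda>N. circle_mean \<rho> N (\<lambda>z. cinner (f z (x + cmult (z ^ n) u)) (cmult a x + cmult (z ^ n) c)))
           \<longlonglongrightarrow> of_real (cmod a ^ 2 + \<rho> ^ (2 * n) * norm c ^ 2)"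
proof -
  note coeff = circle_mean_cinner_tendsto[OF adm \<rho>]
  have expand: "cinner (f z (x + cmult (z ^ n) u)) (cmult a x + cmult (z ^ n) c)
      = z ^ 0 * cnj z ^ 0 * cinner (f z x) (cmult a x) + z ^ 0 * cnj z ^ n * cinner (f z x) c
        + z ^ n * cnj z ^ 0 * cinner (f z u) (cmult a x) + z ^ n * cnj z ^ n * cinner (f z u) c"
    if "cmod z = \<rho>" for z
    using that \<rho> is_Bop_admissible_apply[OF adm, of z]
    by (simp add: blinfun.add_right is_Bop_apply_cmult cinner_add_left cinner_add_right
        cinner_cmult_left cinner_cmult_right algebra_simps)
  have "(\<lambda>N. circle_mean \<rho> N (\<lambda>z. cinner (f z (x + cmult (z ^ n) u)) (cmult a x + cmult (z ^ n) c)))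
      \<longlonglongrightarrow> cinner (A 0 x) (cmult a x) + cinner (A n x) c * \<rho> ^ (2 * n) + 0 + cinner (A 0 u) c * \<rho> ^ (2 * n)"
    using tendsto_add[OF tendsto_add[OF tendsto_add[OF coeff[of 0 0 x "cmult a x"] coeff[of 0 n x c]]
        coeff[of n 0 u "cmult a x"]] coeff[of n n u c]] n \<rho>
    by (simp add: circle_mean_add circle_mean_cong[OF _ expand])
  also have "cinner (A 0 x) (cmult a x) + cinner (A n x) c * \<rho> ^ (2 * n) + 0 + cinner (A 0 u) c * \<rho> ^ (2 * n)
      = of_real (cmod a ^ 2 + \<rho> ^ (2 * n) * norm c ^ 2)"
  proof -
    have "cinner (A 0 x) (cmult a x) = of_real (cmod a ^ 2)"
      using x by (simp add: A0 cinner_self norm_cmult)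
    moreover have "cinner (A n x) c + cinner (A 0 u) c = of_real (norm c ^ 2)"
      by (simp add: A0 c_def cinner_self flip: cinner_add_left)
    ultimately show ?thesis
      by (simp add: mult.commute flip: distrib_right)
  qed
  finally show ?thesis .
qed

lemma coeff_inequality_radius:
  assumes adm: "admissible J A f" and A0: "A 0 = cscal J a" and n: "0 < n"
    and \<rho>: "0 < \<rho>" "\<rho> < 1" and x: "norm x = 1"
  shows "cmod a ^ 2 + \<rho> ^ (2 * n) * norm (A n x + cmult a u) ^ 2
           \<le> sup_norm f ^ 2 * (1 + \<rho> ^ (2 * n) * norm u ^ 2)"
proof -
  define c where "c = A n x + cmult a u"
  define V where "V z = x + cmult (z ^ n) u" for z
  define Q where "Q z = cmult a x + cmult (z ^ n) c" for z
  define L where "L = cmod a ^ 2 + \<rho> ^ (2 * n) * norm c ^ 2"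
  define W where "W = 1 + \<rho> ^ (2 * n) * norm u ^ 2"
  have "(\<lambda>N. circle_mean \<rho> N (\<lambda>z. cinner (f z (V z)) (Q z))) \<longlonglongrightarrow> of_real L"
    unfolding V_def Q_def L_def c_def using \<rho> by (intro circle_mean_test_vector_tendsto adm A0 n x) auto
  then have lim: "(\<lambda>N. 2 * Re (circle_mean \<rho> N (\<lambda>z. cinner (f z (V z)) (Q z)))) \<longlonglongrightarrow> 2 * L"
    by (intro tendsto_intros) (use tendsto_Re in fastforce)
  have "2 * Re (circle_mean \<rho> N (\<lambda>z. cinner (f z (V z)) (Q z))) \<le> sup_norm f ^ 2 * W + L"
    if "n < N" for N
  proof -
    have "2 * Re (circle_mean \<rho> N (\<lambda>z. cinner (f z (V z)) (Q z)))
        = circle_mean \<rho> N (\<lambda>z. 2 * Re (cinner (f z (V z)) (Q z)))"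
      by (simp add: Re_circle_mean circle_mean_mult_left)
    also have "\<dots> \<le> circle_mean \<rho> N (\<lambda>z. sup_norm f ^ 2 * norm (V z) ^ 2 + norm (Q z) ^ 2)"
      using \<rho> by (intro circle_mean_mono two_Re_cinner_le_sup_norm[OF adm]) auto
    also have "\<dots> = sup_norm f ^ 2 * W + L"
      using that n \<rho> x
      by (simp add: circle_mean_add circle_mean_mult_left V_def Q_def W_def L_def
          circle_mean_norm_add_cmult_power2 norm_cmult)
    finally show ?thesis .
  qed
  then have "2 * L \<le> sup_norm f ^ 2 * W + L"
    by (intro LIMSEQ_le_const2[OF lim] exI[of _ "Suc n"]) auto
  then show ?thesis
    by (simp add: L_def W_def c_def)
qed

lemma coeff_inequality:
  assumes adm: "admissible J A f" and A0: "A 0 = cscal J a" and n: "0 < n" and x: "norm x = 1"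
  shows "cmod a ^ 2 + norm (A n x + cmult a u) ^ 2 \<le> sup_norm f ^ 2 * (1 + norm u ^ 2)"
proof -
  define K where "K = norm (A n x + cmult a u) ^ 2"
  have "((\<lambda>\<rho>. sup_norm f ^ 2 * (1 + \<rho> ^ (2 * n) * norm u ^ 2))
      \<longlongrightarrow> sup_norm f ^ 2 * (1 + 1 ^ (2 * n) * norm u ^ 2)) (at_left 1)"
    by (intro tendsto_intros)
  moreover have "((\<lambda>\<rho>. cmod a ^ 2 + \<rho> ^ (2 * n) * K) \<longlongrightarrow> cmod a ^ 2 + 1 ^ (2 * n) * K) (at_left 1)"
    by (intro tendsto_intros)
  moreover have "\<forall>\<^sub>F \<rho> in at_left 1. cmod a ^ 2 + \<rho> ^ (2 * n) * K
      \<le> sup_norm f ^ 2 * (1 + \<rho> ^ (2 * n) * norm u ^ 2)"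
    by (rule eventually_mono[OF eventually_at_left_real[of 0 1]])
      (use coeff_inequality_radius[OF adm A0 n _ _ x] in \<open>auto simp: K_def\<close>)
  ultimately show ?thesis
    using tendsto_le[OF trivial_limit_at_left_real] by (fastforce simp: K_def)
qed

lemma norm_coeff_apply_power2_le:
  assumes "admissible J A f" "A 0 = cscal J a" "0 < n" "norm x = 1"
  shows "cmod a ^ 2 + norm (A n x) ^ 2 \<le> sup_norm f ^ 2"
  using coeff_inequality[OF assms, of 0] by simp

lemma sup_norm_mult_norm_coeff_apply_le_optimized:
  assumes adm: "admissible J A f" and A0: "A 0 = cscal J a" and n: "0 < n" and x: "norm x = 1"
    and a: "0 < cmod a" "cmod a < sup_norm f"
  shows "sup_norm f * norm (A n x) \<le> sup_norm f ^ 2 - cmod a ^ 2"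
proof -
  define M \<alpha> \<beta> where "M = sup_norm f" and "\<alpha> = cmod a" and "\<beta> = norm (A n x)"
  define D where "D = M ^ 2 - \<alpha> ^ 2"
  (* the optimal test vector in the direction of A\<^sub>n x *)
  define u where "u = cmult (of_real (\<alpha> ^ 2 / D) / a) (A n x)"
  have "\<alpha> ^ 2 < M ^ 2"
    using a by (intro power_strict_mono) (auto simp: M_def \<alpha>_def)
  then have D: "0 < D"
    by (simp add: D_def)
  have "cmult a u = (\<alpha> ^ 2 / D) *\<^sub>R A n x"
    using a by (simp add: u_def del: of_real_divide of_real_power)
  moreover have "1 + \<alpha> ^ 2 / D = M ^ 2 / D"
    using D by (simp add: D_def field_simps)
  ultimately have "A n x + cmult a u = (M ^ 2 / D) *\<^sub>R A n x"
    by (metis scaleR_add_left scaleR_one)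
  then have "norm (A n x + cmult a u) = M ^ 2 / D * \<beta>"
    using D by (simp add: \<beta>_def)
  moreover have "norm u = \<alpha> / D * \<beta>"
  proof -
    have "cmod (of_real (\<alpha> ^ 2 / D) / a) = \<alpha> ^ 2 / D / \<alpha>"
      using D by (simp add: norm_divide \<alpha>_def del: of_real_divide of_real_power)
    also have "\<dots> = \<alpha> / D"
      using a by (simp add: \<alpha>_def power2_eq_square)
    finally show ?thesis
      by (simp add: u_def norm_cmult \<beta>_def)
  qed
  ultimately have "\<alpha> ^ 2 + (M ^ 2 / D * \<beta>) ^ 2 \<le> M ^ 2 * (1 + (\<alpha> / D * \<beta>) ^ 2)"
    using coeff_inequality[OF adm A0 n x, of u] by (simp add: M_def \<alpha>_def)
  then show ?thesis
    unfolding D_def M_def \<alpha>_def \<beta>_def by (rule mult_le_of_optimized_bound[OF a])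
qed

lemma sup_norm_mult_norm_coeff_apply_le:
  assumes adm: "admissible J A f" and A0: "A 0 = cscal J a" and n: "0 < n" and x: "norm x = 1"
  shows "sup_norm f * norm (A n x) \<le> sup_norm f ^ 2 - cmod a ^ 2"
proof -
  have M: "0 \<le> sup_norm f"
    by (rule sup_norm_nonneg[OF adm])
  note basic = norm_coeff_apply_power2_le[OF adm A0 n x]
  consider "sup_norm f \<le> cmod a" | "a = 0" | "0 < cmod a" "cmod a < sup_norm f"
    by force
  then show ?thesis
  proof cases
    case 1
    then have "sup_norm f ^ 2 \<le> cmod a ^ 2"
      using M by (simp add: power_mono)
    then have "norm (A n x) ^ 2 \<le> 0"
      using basic by linarith
    then have "norm (A n x) = 0"
      by (simp add: power2_less_eq_zero_iff)
    then show ?thesis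
      using basic by simp
  next
    case 2
    have "norm (A n x) \<le> sup_norm f"
      by (rule power2_le_imp_le) (use basic M 2 in auto)
    then show ?thesis
      using 2 M by (simp add: power2_eq_square mult_left_mono)
  next
    case 3
    then show ?thesis
      by (rule sup_norm_mult_norm_coeff_apply_le_optimized[OF adm A0 n x])
  qed
qed

lemma admissible_cscal:
  assumes sums: "\<And>z. z \<in> ball 0 1 \<Longrightarrow> (\<lambda>k. c k * z ^ k) sums \<phi> z"
    and bound: "\<And>z. z \<in> ball 0 1 \<Longrightarrow> cmod (\<phi> z) \<le> 1"
  shows "admissible J (\<lambda>k. cscal J (c k)) (\<lambda>z. cscal J (\<phi> z))"
    and "sup_norm (\<lambda>z. cscal J (\<phi> z)) \<le> 1"
proof -
  have norm_le_1: "norm (cscal J (\<phi> z)) \<le> 1" if "z \<in> ball 0 1" for z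
  proof -
    have "norm (cscal J (\<phi> z)) \<le> cmod (\<phi> z)"
      by (rule norm_blinfun_bound) (simp_all add: norm_cmult)
    then show ?thesis
      using bound[OF that] by linarith
  qed
  have "bounded_linear (cscal J)"
    unfolding cscal_def
    by (intro bounded_linear_add bounded_linear_compose[OF bounded_linear_scaleR_left bounded_linear_Re]
        bounded_linear_compose[OF bounded_linear_scaleR_left bounded_linear_Im])
  moreover have "cscal J c o\<^sub>L cscal J d = cscal J (c * d)" for c d
    by (rule blinfun_eqI) simp
  ultimately have "(\<lambda>k. cscal J (z ^ k) o\<^sub>L cscal J (c k)) sums cscal J (\<phi> z)" if "z \<in> ball 0 1" for z
    using bounded_linear.sums[OF _ sums[OF that]] by (simp add: mult.commute)
  moreover have "is_Bop J (cscal J c)" for c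
    unfolding is_Bop_def by (rule blinfun_eqI) (simp add: J_cmult)
  moreover have "bounded ((\<lambda>z. cscal J (\<phi> z)) ` ball 0 1)"
    using norm_le_1 by (auto simp: bounded_iff intro!: exI[of _ 1])
  ultimately show "admissible J (\<lambda>k. cscal J (c k)) (\<lambda>z. cscal J (\<phi> z))"
    by (auto simp: admissible_def)
  show "sup_norm (\<lambda>z. cscal J (\<phi> z)) \<le> 1"
    unfolding sup_norm_def using norm_le_1 by (intro cSUP_least) auto
qed

end

locale nontrivial_complex_structure = complex_structure J for J :: "'h::real_inner \<Rightarrow>\<^sub>L 'h" +
  assumes nontrivial: "\<exists>x::'h. x \<noteq> 0"
begin

lemma obtain_unit_vector:
  obtains x :: 'h where "norm x = 1"
proof -
  obtain x :: 'h where "x \<noteq> 0"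
    using nontrivial by blast
  then show ?thesis
    using that[of "x /\<^sub>R norm x"] by simp
qed

lemma norm_cscal [simp]: "norm (cscal J c) = cmod c"
proof (rule antisym)
  show "norm (cscal J c) \<le> cmod c"
    by (rule norm_blinfun_bound) (simp_all add: norm_cmult)
  obtain x :: 'h where x: "norm x = 1"
    by (rule obtain_unit_vector)
  then show "cmod c \<le> norm (cscal J c)"
    using norm_blinfun[of "cscal J c" x] by (simp add: norm_cmult)
qed

lemma abs_coeff0_le_sup_norm:
  assumes "admissible J A f" "A 0 = cscal J a"
  shows "cmod a \<le> sup_norm f"
proof -
  obtain x :: 'h where "norm x = 1"
    by (rule obtain_unit_vector)
  then have "cmod a ^ 2 \<le> sup_norm f ^ 2"
    using norm_coeff_apply_power2_le[OF assms, of 1 x] zero_le_power2[of "norm (A 1 x)"] by linarith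
  then show ?thesis
    by (rule power2_le_imp_le) (rule sup_norm_nonneg[OF assms(1)])
qed

lemma coeff_eq_0_if_abs_coeff0_eq_sup_norm:
  assumes adm: "admissible J A f" and A0: "A 0 = cscal J a"
    and a: "cmod a = sup_norm f" and n: "0 < n"
  shows "A n = 0"
proof -
  have "norm (A n) \<le> 0"
  proof (rule norm_blinfun_le_unit)
    fix x :: 'h
    assume "norm x = 1"
    then show "norm (A n x) \<le> 0"
      using norm_coeff_apply_power2_le[OF adm A0 n] a by simp
  qed simp
  then show ?thesis
    by simp
qed

lemma norm_coeff_le:
  assumes adm: "admissible J A f" and A0: "A 0 = cscal J a"
    and M: "0 < sup_norm f" and n: "0 < n"
  shows "norm (A n) \<le> (sup_norm f ^ 2 - cmod a ^ 2) / sup_norm f"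
proof (rule norm_blinfun_le_unit)
  show "0 \<le> (sup_norm f ^ 2 - cmod a ^ 2) / sup_norm f"
    using abs_coeff0_le_sup_norm[OF adm A0] M by (simp add: power_mono)
  show "norm (A n x) \<le> (sup_norm f ^ 2 - cmod a ^ 2) / sup_norm f" if "norm x = 1" for x
    using sup_norm_mult_norm_coeff_apply_le[OF adm A0 n that] M by (simp add: field_simps)
qed

lemma bohr_sum_le:
  assumes adm: "admissible J A f" and A0: "A 0 = cscal J a" and r: "0 \<le> r" "r \<le> 1/3"
  shows "summable (\<lambda>n. norm (A n) * r ^ n)"
    and "(\<Sum>n. norm (A n) * r ^ n) \<le> sup_norm f - (sup_norm f - cmod a) ^ 2 / (2 * sup_norm f)"
proof -
  show summable: "summable (\<lambda>n. norm (A n) * r ^ n)"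
    using admissible_summable[OF adm] r by simp
  show "(\<Sum>n. norm (A n) * r ^ n) \<le> sup_norm f - (sup_norm f - cmod a) ^ 2 / (2 * sup_norm f)"
  proof (cases "sup_norm f = 0")
    case True
    then have "a = 0"
      using abs_coeff0_le_sup_norm[OF adm A0] by simp
    then have "A n = 0" for n
      using coeff_eq_0_if_abs_coeff0_eq_sup_norm[OF adm A0 _, of n] True A0
      by (cases "n = 0") (auto intro: blinfun_eqI)
    then show ?thesis
      using True by simp
  next
    case False
    then have M: "0 < sup_norm f"
      using sup_norm_nonneg[OF adm] by simp
    have "(\<Sum>n. norm (A n) * r ^ n) \<le> norm (A 0) + (sup_norm f ^ 2 - cmod a ^ 2) / sup_norm f / 2"
      using abs_coeff0_le_sup_norm[OF adm A0] M norm_coeff_le[OF adm A0 M]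
      by (intro power_series_le_one_third summable r) (simp_all add: power_mono)
    also have "\<dots> = sup_norm f - (sup_norm f - cmod a) ^ 2 / (2 * sup_norm f)"
      using M by (simp add: A0 field_simps power2_eq_square)
    finally show ?thesis .
  qed
qed

lemma bohr_inequality:
  assumes adm: "admissible J A f" and r: "0 \<le> r" "r \<le> 1/3"
  shows "summable (\<lambda>n. norm (A n) * r ^ n)" and "(\<Sum>n. norm (A n) * r ^ n) \<le> sup_norm f"
proof -
  obtain a where A0: "A 0 = cscal J a"
    using adm by (auto simp: admissible_def)
  show "summable (\<lambda>n. norm (A n) * r ^ n)"
    by (rule bohr_sum_le(1)[OF adm A0 r])
  have "0 \<le> (sup_norm f - cmod a) ^ 2 / (2 * sup_norm f)"
    using sup_norm_nonneg[OF adm] by simp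
  then show "(\<Sum>n. norm (A n) * r ^ n) \<le> sup_norm f"
    using bohr_sum_le(2)[OF adm A0 r] by linarith
qed

lemma bohr_inequality_strict:
  assumes adm: "admissible J A f" and nonconst: "\<not> (\<exists>C. \<forall>z\<in>ball 0 1. f z = C)"
    and r: "0 \<le> r" "r \<le> 1/3"
  shows "(\<Sum>n. norm (A n) * r ^ n) < sup_norm f"
proof -
  obtain a where A0: "A 0 = cscal J a"
    using adm by (auto simp: admissible_def)
  have "cmod a \<noteq> sup_norm f"
    using nonconst admissible_const[OF adm coeff_eq_0_if_abs_coeff0_eq_sup_norm[OF adm A0]] by blast
  then have "cmod a < sup_norm f"
    using abs_coeff0_le_sup_norm[OF adm A0] by simp
  moreover from this have "0 < sup_norm f"
    using norm_ge_zero[of a] by linarith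
  ultimately have "0 < (sup_norm f - cmod a) ^ 2 / (2 * sup_norm f)"
    by (intro divide_pos_pos) auto
  then show ?thesis
    using bohr_sum_le(2)[OF adm A0 r] by linarith
qed

end

section \<open>Sharpness of the radius: Moebius maps\<close>

definition moebius_coeff :: "real \<Rightarrow> nat \<Rightarrow> real" where
  "moebius_coeff b k = (if k = 0 then b else - (1 - b ^ 2) * b ^ (k - 1))"

lemma moebius_sums:
  assumes b: "0 \<le> b" "b < 1" and z: "cmod z < 1"
  shows "(\<lambda>k. of_real (moebius_coeff b k) * z ^ k) sums ((of_real b - z) / (1 - of_real b * z))"
proof -
  have "cmod (of_real b * z) = b * cmod z"
    using b by (simp add: norm_mult)
  also have "\<dots> \<le> cmod z"
    using b by (intro mult_left_le_one_le) auto
  finally have bz: "cmod (of_real b * z) < 1"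
    using z by linarith
  then have nonzero: "1 - of_real b * z \<noteq> 0"
    by auto
  have "(\<lambda>k. of_real (moebius_coeff b (Suc k)) * z ^ Suc k)
      = (\<lambda>k. - of_real (1 - b ^ 2) * z * (of_real b * z) ^ k)"
    by (simp add: moebius_coeff_def fun_eq_iff power_mult_distrib)
  also have "\<dots> sums (- of_real (1 - b ^ 2) * z * (1 / (1 - of_real b * z)))"
    by (intro sums_mult geometric_sums bz)
  finally have "(\<lambda>k. of_real (moebius_coeff b k) * z ^ k)
      sums (- of_real (1 - b ^ 2) * z * (1 / (1 - of_real b * z)) + of_real (moebius_coeff b 0) * z ^ 0)"
    by (rule sums_Suc)
  also have "- of_real (1 - b ^ 2) * z * (1 / (1 - of_real b * z)) + of_real (moebius_coeff b 0) * z ^ 0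
      = (of_real b - z) / (1 - of_real b * z)"
    using nonzero by (simp add: moebius_coeff_def divide_simps) (simp add: algebra_simps power2_eq_square)
  finally show ?thesis .
qed

lemma norm_moebius_le_1:
  assumes "0 \<le> b" "b < 1" "cmod z < 1"
  shows "cmod ((of_real b - z) / (1 - of_real b * z)) \<le> 1"
proof -
  have "(of_real b - z) / (1 - of_real b * z) = - Moebius_function 0 (of_real b) z"
    by (simp add: Moebius_function_simple minus_divide_left)
  then show ?thesis
    using Moebius_function_norm_lt_1[of "of_real b" z 0] assms by simp
qed

lemma abs_moebius_coeff_sums:
  assumes b: "0 \<le> b" "b < 1" and r: "0 \<le> r" "b * r < 1"
  shows "(\<lambda>k. \<bar>moebius_coeff b k\<bar> * r ^ k) sums (b + (1 - b ^ 2) * r / (1 - b * r))"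
proof -
  have "(\<lambda>k. \<bar>moebius_coeff b (Suc k)\<bar> * r ^ Suc k) = (\<lambda>k. (1 - b ^ 2) * r * (b * r) ^ k)"
    using b by (simp add: moebius_coeff_def fun_eq_iff abs_mult power_mult_distrib power_le_one)
  also have "\<dots> sums ((1 - b ^ 2) * r * (1 / (1 - b * r)))"
    using b r by (intro sums_mult geometric_sums) simp
  finally have "(\<lambda>k. \<bar>moebius_coeff b k\<bar> * r ^ k)
      sums ((1 - b ^ 2) * r * (1 / (1 - b * r)) + \<bar>moebius_coeff b 0\<bar> * r ^ 0)"
    by (rule sums_Suc)
  then show ?thesis
    using b by (simp add: moebius_coeff_def add.commute)
qed

lemma moebius_coeff_sum_gt_1:
  fixes s :: real
  assumes s: "1/3 < s" "s \<le> 1/2"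
  obtains b where "0 \<le> b" "b < 1" "b * s < 1" "1 < b + (1 - b ^ 2) * s / (1 - b * s)"
proof -
  (* the sum exceeds 1 exactly when (1 + 2 b) s > 1, i.e. when b exceeds q below *)
  define q where "q = (1 - s) / (2 * s)"
  have q: "0 \<le> q" "q < 1" "s * (1 + 2 * q) = 1"
    using s by (simp_all add: q_def field_simps)
  define b where "b = (1 + q) / 2"
  have b: "0 \<le> b" "b < 1" "q < b"
    using q by (auto simp: b_def)
  have bs: "b * s < 1"
    using b s mult_left_le_one_le[of s b] by linarith
  have "1 < s * (1 + 2 * b)"
    using q(3) b s mult_strict_left_mono[of "1 + 2 * q" "1 + 2 * b" s] by linarith
  then have "0 < (1 - b) * (s * (1 + 2 * b) - 1)"
    using b by (intro mult_pos_pos) auto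
  then have "(1 - b) * (1 - b * s) < (1 - b ^ 2) * s"
    by (simp add: power2_eq_square algebra_simps)
  then have "1 < b + (1 - b ^ 2) * s / (1 - b * s)"
    using bs by (simp add: field_simps)
  then show ?thesis
    using that b bs by blast
qed

context nontrivial_complex_structure
begin

lemma bohr_radius_sharp:
  assumes r: "1/3 < r"
  shows "\<exists>A f. admissible J A f \<and>
           \<not> (summable (\<lambda>n. norm (A n) * r ^ n) \<and> (\<Sum>n. norm (A n) * r ^ n) \<le> sup_norm f)"
proof -
  define s where "s = min r (1/2)"
  have s: "1/3 < s" "s \<le> 1/2" "s \<le> r"
    using r by (auto simp: s_def)
  obtain b where b: "0 \<le> b" "b < 1" "b * s < 1" and S: "1 < b + (1 - b ^ 2) * s / (1 - b * s)"
    using moebius_coeff_sum_gt_1[OF s(1,2)] by blast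
  define A where "A k = cscal J (of_real (moebius_coeff b k))" for k
  define f where "f z = cscal J ((of_real b - z) / (1 - of_real b * z))" for z
  have adm: "admissible J A f" and sup: "sup_norm f \<le> 1"
    unfolding A_def f_def using b moebius_sums norm_moebius_le_1
    by (intro admissible_cscal; simp)+
  have sums: "(\<lambda>k. norm (A k) * s ^ k) sums (b + (1 - b ^ 2) * s / (1 - b * s))"
    unfolding A_def using abs_moebius_coeff_sums[OF b(1,2) _ b(3)] s by simp
  have "\<not> (summable (\<lambda>n. norm (A n) * r ^ n) \<and> (\<Sum>n. norm (A n) * r ^ n) \<le> sup_norm f)"
  proof
    assume *: "summable (\<lambda>n. norm (A n) * r ^ n) \<and> (\<Sum>n. norm (A n) * r ^ n) \<le> sup_norm f"
    have "b + (1 - b ^ 2) * s / (1 - b * s) \<le> (\<Sum>n. norm (A n) * r ^ n)"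
      unfolding sums_unique[OF sums]
      using * s by (intro suminf_le sums_summable[OF sums] mult_left_mono power_mono) auto
    then show False
      using * sup S by linarith
  qed
  then show ?thesis
    using adm by blast
qed

end

theorem corollary2p11:
  fixes J :: "'h::{real_inner, complete_space} \<Rightarrow>\<^sub>L 'h"
  assumes "cplx_structure J"
    and "\<exists>D::'h set. countable D \<and> closure D = UNIV"
    and "\<exists>x::'h. x \<noteq> 0"
  shows "(\<forall>A f. admissible J A f \<longrightarrow>
            (\<forall>r\<in>{0..1/3::real}. summable (\<lambda>n. norm (A n) * r ^ n) \<and>
                (\<Sum>n. norm (A n) * r ^ n) \<le> sup_norm f))
      \<and> (\<forall>r>1/3::real. \<exists>A f. admissible J A f \<and>
            \<not> (summable (\<lambda>n. norm (A n) * r ^ n) \<and> (\<Sum>n. norm (A n) * r ^ n) \<le> sup_norm f))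
      \<and> (\<forall>A f. admissible J A f \<and> \<not> (\<exists>C. \<forall>z\<in>ball 0 1. f z = C) \<longrightarrow>
            (\<forall>r\<in>{0..1/3::real}. (\<Sum>n. norm (A n) * r ^ n) < sup_norm f))"
proof -
  interpret nontrivial_complex_structure J
    using assms(1,3) by unfold_locales
  show ?thesis
  proof (intro conjI allI impI ballI)
    fix A f and r :: real
    assume "admissible J A f" and "r \<in> {0..1/3}"
    then show "summable (\<lambda>n. norm (A n) * r ^ n)" and "(\<Sum>n. norm (A n) * r ^ n) \<le> sup_norm f"
      using bohr_inequality by auto
  next
    fix r :: real
    assume "1/3 < r"
    then show "\<exists>A f. admissible J A f \<and>
            \<not> (summable (\<lambda>n. norm (A n) * r ^ n) \<and> (\<Sum>n. norm (A n) * r ^ n) \<le> sup_norm f)"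
      by (rule bohr_radius_sharp)
  next
    fix A f and r :: real
    assume "admissible J A f \<and> \<not> (\<exists>C. \<forall>z\<in>ball 0 1. f z = C)" and "r \<in> {0..1/3}"
    then show "(\<Sum>n. norm (A n) * r ^ n) < sup_norm f"
      using bohr_inequality_strict by auto
  qed
qed

end
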